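(* Let $u_1(t_1,t_2)$ and $u_2(t_1,t_2)$ be two left normed commutators in the free variables $t_1,t_2$, each of degree at least two. Then $u_1(C_1,C_2)u_2(C_1,C_2)$ is strongly central in $F$.
   Context: $K$ is an infinite field of characteristic different from 2. Let $X=\{x_1,x_2,x_1',x_2'\}$ and $Y=\{y_1,y_2,y_1',y_2'\}$, and let $K[X;Y]\cong K[X]\otimes_K E(Y)$ be the free supercommutative algebra: the $x$'s are even commuting variables, the $y$'s are odd pairwise anticommuting variables, and $E(Y)$ is the Grassmann algebra on the vector space with basis $Y$. Put $C_1=\begin{pmatrix} x_1&y_1\\ y_1'&x_1'\end{pmatrix}$, $C_2=\begin{pmatrix} x_2&y_2\\ y_2'&x_2'\end{pmatrix}$, and let $F=K[C_1,C_2]$ be the unital $K$-subalgebra of $M_2(K[X;Y])$ generated by $C_1,C_2$. Commutators are $[a,b]=ab-ba$, left normed: $[a_1,\ldots,a_k]=[[a_1,\ldots,a_{k-1}],a_k]$. An element $a\in F$ is strongly central if $a$ is central in $F$ and $ab$ is central in $F$ for every $b\in F$. *)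

theory Defs
  imports Main "HOL-Library.Poly_Mapping"
begin

text \<open>Even variables x1,x2,x1',x2' are indexed by 0,1,2,3; odd variables
y1,y2,y1',y2' are indexed by 0,1,2,3 (ordered in this way for the Grassmann sign).
A supermonomial is a pair (m, S): m an exponent vector (finitely supported) of
the even variables, S the set of odd variables occurring (in increasing order).\<close>

type_synonym smono = "(nat \<Rightarrow>\<^sub>0 nat) \<times> nat set"
type_synonym 'k sc = "smono \<Rightarrow> 'k"

definition gsign :: "nat set \<Rightarrow> nat set \<Rightarrow> 'k::comm_ring_1" where
  "gsign T U = (- 1) ^ card {(t, u). t \<in> T \<and> u \<in> U \<and> u < t}"

definition sc_zero :: "'k::comm_ring_1 sc" where
  "sc_zero = (\<lambda>_. 0)"

definition sc_one :: "'k::comm_ring_1 sc" where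
  "sc_one = (\<lambda>(m, S). if m = 0 \<and> S = {} then 1 else 0)"

definition sc_add :: "'k::comm_ring_1 sc \<Rightarrow> 'k sc \<Rightarrow> 'k sc" where
  "sc_add f g = (\<lambda>z. f z + g z)"

definition sc_scal :: "'k::comm_ring_1 \<Rightarrow> 'k sc \<Rightarrow> 'k sc" where
  "sc_scal c f = (\<lambda>z. c * f z)"

definition sc_mult :: "'k::comm_ring_1 sc \<Rightarrow> 'k sc \<Rightarrow> 'k sc" where
  "sc_mult f g = (\<lambda>(m, S).
     \<Sum>((a, T), (b, U)) \<in> {((a, T), (b, U)). a + b = m \<and> T \<union> U = S \<and> T \<inter> U = {}}.
        gsign T U * f (a, T) * g (b, U))"

definition xv :: "nat \<Rightarrow> 'k::comm_ring_1 sc" where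
  "xv i = (\<lambda>(m, S). if m = Poly_Mapping.single i 1 \<and> S = {} then 1 else 0)"

definition yv :: "nat \<Rightarrow> 'k::comm_ring_1 sc" where
  "yv j = (\<lambda>(m, S). if m = 0 \<and> S = {j} then 1 else 0)"

text \<open>Index False = row/column 1, True = row/column 2.\<close>

type_synonym 'k mat2 = "bool \<Rightarrow> bool \<Rightarrow> 'k sc"

definition mk2 :: "'k sc \<Rightarrow> 'k sc \<Rightarrow> 'k sc \<Rightarrow> 'k sc \<Rightarrow> 'k mat2" where
  "mk2 a b c d = (\<lambda>i j. if \<not> i then (if \<not> j then a else b) else (if \<not> j then c else d))"

definition madd :: "'k::comm_ring_1 mat2 \<Rightarrow> 'k mat2 \<Rightarrow> 'k mat2" where
  "madd A B = (\<lambda>i j. sc_add (A i j) (B i j))"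

definition mscal :: "'k::comm_ring_1 \<Rightarrow> 'k mat2 \<Rightarrow> 'k mat2" where
  "mscal c A = (\<lambda>i j. sc_scal c (A i j))"

definition mmul :: "'k::comm_ring_1 mat2 \<Rightarrow> 'k mat2 \<Rightarrow> 'k mat2" where
  "mmul A B = (\<lambda>i j. sc_add (sc_mult (A i False) (B False j)) (sc_mult (A i True) (B True j)))"

definition mone :: "'k::comm_ring_1 mat2" where
  "mone = (\<lambda>i j. if i = j then sc_one else sc_zero)"

definition C1 :: "'k::comm_ring_1 mat2" where
  "C1 = mk2 (xv 0) (yv 0) (yv 2) (xv 2)"

definition C2 :: "'k::comm_ring_1 mat2" where
  "C2 = mk2 (xv 1) (yv 1) (yv 3) (xv 3)"

inductive_set genF :: "'k::comm_ring_1 mat2 set" where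
  one: "mone \<in> genF"
| c1: "C1 \<in> genF"
| c2: "C2 \<in> genF"
| add: "A \<in> genF \<Longrightarrow> B \<in> genF \<Longrightarrow> madd A B \<in> genF"
| mul: "A \<in> genF \<Longrightarrow> B \<in> genF \<Longrightarrow> mmul A B \<in> genF"
| scal: "A \<in> genF \<Longrightarrow> mscal c A \<in> genF"

definition mcomm :: "'k::comm_ring_1 mat2 \<Rightarrow> 'k mat2 \<Rightarrow> 'k mat2" where
  "mcomm A B = madd (mmul A B) (mscal (- 1) (mmul B A))"

text \<open>A left normed commutator [t_{i_1}, ..., t_{i_k}] in the free variables t1, t2
is given by the list of indices [i_1,...,i_k] (False = t1, True = t2); its degree is k.
Evaluation at t1 := C1, t2 := C2:\<close>

definition genC :: "bool \<Rightarrow> 'k::comm_ring_1 mat2" where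
  "genC b = (if b then C2 else C1)"

fun lncomm :: "bool list \<Rightarrow> 'k::comm_ring_1 mat2" where
  "lncomm [] = mone"
| "lncomm (i # is) = foldl (\<lambda>acc j. mcomm acc (genC j)) (genC i) is"

definition central_in_F :: "'k::comm_ring_1 mat2 \<Rightarrow> bool" where
  "central_in_F a \<longleftrightarrow> a \<in> genF \<and> (\<forall>b \<in> genF. mmul a b = mmul b a)"

definition strongly_central :: "'k::comm_ring_1 mat2 \<Rightarrow> bool" where
  "strongly_central a \<longleftrightarrow> central_in_F a \<and> (\<forall>b \<in> genF. central_in_F (mmul a b))"

end

theory Submission
  imports Defs
begin

text \<open>Write the entries of a 2x2 matrix over K[X;Y] as polynomials in the odd variables with
  coefficients in the central subring K[X].  Modulo terms of higher odd degree, every element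
  of F has the shape [[f + e1 g1 + e2 g2, g1 y1 + g2 y2], [(g1 - e2 t) y1' + (g2 + e1 t) y2', f]]
  with e1 = x1 - x1' and e2 = x2 - x2': the shape holds for 1, C1 and C2 and is preserved by
  sums, scalar multiples and products.  Consequently a commutator [A, Ci] has diagonal entries of
  odd degree at least 2 and off-diagonal entries of odd degree at least 1, with explicitly known
  leading parts.  Since there are only four odd variables, every monomial of odd degree at least 5
  vanishes, so products of two or three such commutators are determined by their leading parts.
  A direct computation then shows that u1 u2 commutes with C1 and C2 and that u1 u2 [b, Ci] = 0;
  the latter makes u1 u2 b commute with the generators for every b in F.\<close>

lemma finite_summands:
  fixes m :: "'a \<Rightarrow>\<^sub>0 nat"
  shows "finite {(a, b). a + b = m}"
proof -
  let ?K = "Poly_Mapping.keys m"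
  define M where "M = sum (Poly_Mapping.lookup m) ?K"
  let ?bounded = "{f. \<forall>x. (x \<in> ?K \<longrightarrow> f x \<in> {..M}) \<and> (x \<notin> ?K \<longrightarrow> f x = 0)}"
  have "Poly_Mapping.lookup a \<in> ?bounded" if "a + b = m" for a b
    unfolding mem_Collect_eq
  proof (intro allI conjI impI)
    fix x
    have le: "Poly_Mapping.lookup a x \<le> Poly_Mapping.lookup m x"
      using that by (auto simp: Poly_Mapping.lookup_add)
    show "Poly_Mapping.lookup a x \<in> {..M}" if "x \<in> ?K"
    proof -
      have "Poly_Mapping.lookup m x \<le> M" unfolding M_def using that by (intro member_le_sum) auto
      with le show ?thesis by simp
    qed
    show "Poly_Mapping.lookup a x = 0" if "x \<notin> ?K"
      using le that by (simp add: Poly_Mapping.in_keys_iff)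
  qed
  then have "Poly_Mapping.lookup ` {a. \<exists>b. a + b = m} \<subseteq> ?bounded" by auto
  moreover have "finite ?bounded" by (rule finite_set_of_finite_funs) auto
  moreover have "inj_on Poly_Mapping.lookup {a. \<exists>b. a + b = m}"
    by (meson injI inj_on_subset poly_mapping.lookup_inject subset_UNIV)
  ultimately have "finite {a. \<exists>b. a + b = m}"
    using finite_subset finite_imageD by blast
  moreover have "{(a, b). a + b = m} \<subseteq> (\<lambda>a. (a, m - a)) ` {a. \<exists>b. a + b = m}"
    by (auto intro!: image_eqI)
  ultimately show ?thesis using finite_subset by blast
qed

definition smono_splits :: "(nat \<Rightarrow>\<^sub>0 nat) \<Rightarrow> nat set \<Rightarrow> (smono \<times> smono) set" where
  "smono_splits m S = {((a, T), (b, U)). a + b = m \<and> T \<union> U = S \<and> T \<inter> U = {}}"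

lemma finite_smono_splits: "finite S \<Longrightarrow> finite (smono_splits m S)"
proof -
  assume S: "finite S"
  have "smono_splits m S \<subseteq>
      (\<lambda>((a, b), (T, U)). ((a, T), (b, U))) ` ({(a, b). a + b = m} \<times> (Pow S \<times> Pow S))"
  proof clarify
    fix a T b U assume "((a, T), (b, U)) \<in> smono_splits m S"
    then show "((a, T), (b, U)) \<in> (\<lambda>((a, b), (T, U)). ((a, T), (b, U))) `
        ({(a, b). a + b = m} \<times> (Pow S \<times> Pow S))"
      by (intro image_eqI[where x = "((a, b), (T, U))"]) (auto simp: smono_splits_def)
  qed
  then show ?thesis
    by (rule finite_subset) (intro finite_imageI finite_cartesian_product finite_summands, use S in auto)
qed

lemma sc_mult_apply:
  "sc_mult f g (m, S) = (\<Sum>((a, T), (b, U)) \<in> smono_splits m S. gsign T U * f (a, T) * g (b, U))"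
  unfolding sc_mult_def smono_splits_def by simp

lemma gsign_Un_left:
  assumes "finite A" "finite B" "finite C" "A \<inter> B = {}"
  shows "(gsign (A \<union> B) C :: 'k::comm_ring_1) = gsign A C * gsign B C"
proof -
  let ?X = "\<lambda>T. {(t, u). t \<in> T \<and> u \<in> C \<and> u < t}"
  have "?X (A \<union> B) = ?X A \<union> ?X B" by auto
  moreover have "?X A \<inter> ?X B = {}" using assms(4) by auto
  moreover have "finite (?X T)" if "finite T" for T
    by (rule finite_subset[of _ "T \<times> C"]) (use that assms in auto)
  ultimately have "card (?X (A \<union> B)) = card (?X A) + card (?X B)"
    using assms by (simp add: card_Un_disjoint)
  then show ?thesis unfolding gsign_def by (simp add: power_add)
qed

lemma gsign_Un_right:
  assumes "finite A" "finite B" "finite C" "B \<inter> C = {}"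
  shows "(gsign A (B \<union> C) :: 'k::comm_ring_1) = gsign A B * gsign A C"
proof -
  let ?X = "\<lambda>U. {(t, u). t \<in> A \<and> u \<in> U \<and> u < t}"
  have "?X (B \<union> C) = ?X B \<union> ?X C" by auto
  moreover have "?X B \<inter> ?X C = {}" using assms(4) by auto
  moreover have "finite (?X U)" if "finite U" for U
    by (rule finite_subset[of _ "A \<times> U"]) (use that assms in auto)
  ultimately have "card (?X (B \<union> C)) = card (?X B) + card (?X C)"
    using assms by (simp add: card_Un_disjoint)
  then show ?thesis unfolding gsign_def by (simp add: power_add)
qed

lemma gsign_empty_left [simp]: "gsign {} U = 1"
  and gsign_empty_right [simp]: "gsign T {} = 1"
  unfolding gsign_def by simp_all

lemma gsign_singletons: "(gsign {a} {b} :: 'k::comm_ring_1) = (if b < a then -1 else 1)"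
proof -
  have "{(t, u). t \<in> {a} \<and> u \<in> {b} \<and> u < t} = (if b < a then {(a, b)} else {})" by auto
  then show ?thesis unfolding gsign_def by simp
qed

lemma gsign_assoc:
  assumes "finite (A \<union> B \<union> C)" "A \<inter> B = {}" "(A \<union> B) \<inter> C = {}"
  shows "(gsign (A \<union> B) C :: 'k::comm_ring_1) * gsign A B = gsign A (B \<union> C) * gsign B C"
proof -
  have "B \<inter> C = {}" using assms by auto
  then show ?thesis
    using assms by (simp add: gsign_Un_left gsign_Un_right Int_Un_distrib2 Int_commute mult_ac)
qed

lemma gsign_assoc':
  assumes "finite (A \<union> B \<union> C)" "A \<inter> B = {}" "(A \<union> B) \<inter> C = {}"
  shows "(gsign A (B \<union> C) :: 'k::comm_ring_1) * x * (gsign B C * y * z)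
    = gsign (A \<union> B) C * (gsign A B * x * y) * z"
  using gsign_assoc[OF assms, where 'k='k] by (simp add: mult_ac)

lemma sc_mult_assoc_finite:
  fixes f g h :: "'k::comm_ring_1 sc"
  assumes S: "finite S"
  shows "sc_mult (sc_mult f g) h (m, S) = sc_mult f (sc_mult g h) (m, S)"
proof -
  define B where "B x = smono_splits (fst (fst x)) (snd (fst x))" for x :: "smono \<times> smono"
  define B' where "B' x = smono_splits (fst (snd x)) (snd (snd x))" for x :: "smono \<times> smono"
  define L where "L x y = (case x of ((a, T), (c, W)) \<Rightarrow> case y of ((a1, T1), (a2, T2)) \<Rightarrow>
      gsign T W * (gsign T1 T2 * f (a1, T1) * g (a2, T2)) * h (c, W))" for x y :: "smono \<times> smono"
  define R where "R x y = (case x of ((a1, T1), (d, V)) \<Rightarrow> case y of ((a2, T2), (a3, T3)) \<Rightarrow>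
      gsign T1 V * f (a1, T1) * (gsign T2 T3 * g (a2, T2) * h (a3, T3)))" for x y :: "smono \<times> smono"
  have "finite (snd (fst x))" "finite (snd (snd x))" if "x \<in> smono_splits m S" for x
    using that S by (auto simp: smono_splits_def)
  then have finB: "\<forall>x\<in>smono_splits m S. finite (B x)" and finB': "\<forall>x\<in>smono_splits m S. finite (B' x)"
    by (simp_all add: B_def B'_def finite_smono_splits)
  have "sc_mult (sc_mult f g) h (m, S) = (\<Sum>x\<in>smono_splits m S. \<Sum>y\<in>B x. L x y)"
    unfolding sc_mult_apply
    by (intro sum.cong refl) (auto simp: B_def L_def sc_mult_apply sum_distrib_left sum_distrib_right
        intro!: sum.cong split: prod.splits)
  also have "\<dots> = (\<Sum>(x, y)\<in>Sigma (smono_splits m S) B. L x y)"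
    by (rule sum.Sigma[OF finite_smono_splits[OF S] finB])
  also have "\<dots> = (\<Sum>(x, y)\<in>Sigma (smono_splits m S) B'. R x y)"
    apply (rule sum.reindex_bij_witness[where
        j = "\<lambda>(((a, T), (c, W)), ((a1, T1), (a2, T2))). (((a1, T1), (a2 + c, T2 \<union> W)), ((a2, T2), (c, W)))"
        and i = "\<lambda>(((a1, T1), (d, V)), ((a2, T2), (a3, T3))). (((a1 + a2, T1 \<union> T2), (a3, T3)), ((a1, T1), (a2, T2)))"])
        apply (auto simp: B_def B'_def smono_splits_def add.assoc)[4]
    apply (clarsimp simp: B_def smono_splits_def L_def R_def)
    apply (rule gsign_assoc')
    using S by auto
  also have "\<dots> = (\<Sum>x\<in>smono_splits m S. \<Sum>y\<in>B' x. R x y)"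
    by (rule sum.Sigma[OF finite_smono_splits[OF S] finB', symmetric])
  also have "\<dots> = sc_mult f (sc_mult g h) (m, S)"
    unfolding sc_mult_apply
    by (intro sum.cong refl) (auto simp: B'_def R_def sc_mult_apply sum_distrib_left sum_distrib_right
        intro!: sum.cong split: prod.splits)
  finally show ?thesis .
qed


lemma sum_eq_single:
  assumes "finite A" "x \<in> A" "\<And>y. y \<in> A \<Longrightarrow> y \<noteq> x \<Longrightarrow> F y = 0"
  shows "sum F A = F x"
proof -
  have "sum F A = sum F {x}"
    by (rule sum.mono_neutral_right) (use assms in auto)
  then show ?thesis by simp
qed

section \<open>The superalgebra K[X;Y]\<close>

text \<open>The type of supermonomials also contains pairs with an infinite set of odd variables.
  Coefficient functions vanishing there form a ring: the convolution sums are then finite.\<close>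

definition sc_reg :: "'k::comm_ring_1 sc set" where
  "sc_reg = {f. \<forall>m S. infinite S \<longrightarrow> f (m, S) = 0}"

lemma sc_regD: "f \<in> sc_reg \<Longrightarrow> infinite S \<Longrightarrow> f (m, S) = 0"
  unfolding sc_reg_def by auto

lemma sc_reg_zero: "sc_zero \<in> sc_reg"
  and sc_reg_one: "sc_one \<in> sc_reg"
  and sc_reg_add: "f \<in> sc_reg \<Longrightarrow> g \<in> sc_reg \<Longrightarrow> sc_add f g \<in> sc_reg"
  and sc_reg_scal: "f \<in> sc_reg \<Longrightarrow> sc_scal c f \<in> sc_reg"
  and sc_reg_xv: "xv i \<in> sc_reg"
  and sc_reg_yv: "yv j \<in> sc_reg"
  unfolding sc_reg_def sc_zero_def sc_one_def sc_add_def sc_scal_def xv_def yv_def by auto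

lemma sc_reg_mult: "f \<in> sc_reg \<Longrightarrow> g \<in> sc_reg \<Longrightarrow> sc_mult f g \<in> sc_reg"
  unfolding sc_reg_def
proof clarify
  fix m and S :: "nat set"
  assume f: "\<forall>m S. infinite S \<longrightarrow> f (m, S) = 0" and g: "\<forall>m S. infinite S \<longrightarrow> g (m, S) = 0"
    and S: "infinite S"
  show "sc_mult f g (m, S) = 0" unfolding sc_mult_apply
  proof (rule sum.neutral, clarify)
    fix a T b U assume "((a, T), (b, U)) \<in> smono_splits m S"
    then have "infinite T \<or> infinite U" using S unfolding smono_splits_def by auto
    then show "gsign T U * f (a, T) * g (b, U) = 0" using f g by auto
  qed
qed

lemma sc_mult_assoc:
  assumes "f \<in> sc_reg" "g \<in> sc_reg" "h \<in> sc_reg"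
  shows "sc_mult (sc_mult f g) h = sc_mult f (sc_mult g h)"
proof (rule ext, clarify)
  fix m S
  show "sc_mult (sc_mult f g) h (m, S) = sc_mult f (sc_mult g h) (m, S)"
  proof (cases "finite S")
    case True then show ?thesis by (rule sc_mult_assoc_finite)
  next
    case False then show ?thesis using assms sc_reg_mult sc_regD by metis
  qed
qed

lemma sc_mult_add_right: "sc_mult f (sc_add g h) = sc_add (sc_mult f g) (sc_mult f h)"
  by (rule ext, clarify)
    (simp add: sc_mult_apply sc_add_def sum.distrib[symmetric] distrib_left distrib_right split_def)

lemma sc_mult_add_left: "sc_mult (sc_add f g) h = sc_add (sc_mult f h) (sc_mult g h)"
  by (rule ext, clarify)
    (simp add: sc_mult_apply sc_add_def sum.distrib[symmetric] distrib_left distrib_right split_def)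

lemma sc_mult_scal_left: "sc_mult (sc_scal c f) g = sc_scal c (sc_mult f g)"
  by (rule ext, clarify) (simp add: sc_mult_apply sc_scal_def sum_distrib_left mult_ac split_def)

lemma sc_mult_one_left:
  assumes "f \<in> sc_reg"
  shows "sc_mult sc_one f = f"
proof (rule ext, clarify)
  fix m S
  show "sc_mult sc_one f (m, S) = f (m, S)"
  proof (cases "finite S")
    case True
    have "sc_mult sc_one f (m, S)
        = (\<lambda>((a, T), (b, U)). gsign T U * sc_one (a, T) * f (b, U)) ((0, {}), (m, S))"
      unfolding sc_mult_apply
      by (rule sum_eq_single[OF finite_smono_splits[OF True]])
        (auto simp: smono_splits_def sc_one_def split: if_splits)
    then show ?thesis by (simp add: sc_one_def)
  next
    case False
    then show ?thesis
      using sc_regD[OF assms] sc_regD[OF sc_reg_mult[OF sc_reg_one assms]] by simp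
  qed
qed

lemma sc_mult_one_right:
  assumes "f \<in> sc_reg"
  shows "sc_mult f sc_one = f"
proof (rule ext, clarify)
  fix m S
  show "sc_mult f sc_one (m, S) = f (m, S)"
  proof (cases "finite S")
    case True
    have "sc_mult f sc_one (m, S)
        = (\<lambda>((a, T), (b, U)). gsign T U * f (a, T) * sc_one (b, U)) ((m, S), (0, {}))"
      unfolding sc_mult_apply
      by (rule sum_eq_single[OF finite_smono_splits[OF True]])
        (auto simp: smono_splits_def sc_one_def split: if_splits)
    then show ?thesis by (simp add: sc_one_def)
  next
    case False
    then show ?thesis
      using sc_regD[OF assms] sc_regD[OF sc_reg_mult[OF assms sc_reg_one]] by simp
  qed
qed

typedef (overloaded) ('k::comm_ring_1) salg = "sc_reg :: 'k sc set"
  morphisms coeffs Abs_salg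
  using sc_reg_zero by blast

setup_lifting type_definition_salg

instantiation salg :: (comm_ring_1) ring_1
begin

lift_definition zero_salg :: "'a salg" is sc_zero by (rule sc_reg_zero)
lift_definition one_salg :: "'a salg" is sc_one by (rule sc_reg_one)
lift_definition plus_salg :: "'a salg \<Rightarrow> 'a salg \<Rightarrow> 'a salg" is sc_add by (rule sc_reg_add)
lift_definition uminus_salg :: "'a salg \<Rightarrow> 'a salg" is "sc_scal (-1)" by (rule sc_reg_scal)
lift_definition minus_salg :: "'a salg \<Rightarrow> 'a salg \<Rightarrow> 'a salg" is "\<lambda>f g. sc_add f (sc_scal (-1) g)"
  by (intro sc_reg_add sc_reg_scal)
lift_definition times_salg :: "'a salg \<Rightarrow> 'a salg \<Rightarrow> 'a salg" is sc_mult by (rule sc_reg_mult)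

instance
proof
  fix a b c :: "'a salg"
  show "a + b + c = a + (b + c)" by transfer (auto simp: sc_add_def add.assoc)
  show "a + b = b + a" by transfer (auto simp: sc_add_def add.commute)
  show "0 + a = a" by transfer (auto simp: sc_add_def sc_zero_def)
  show "- a + a = 0" by transfer (auto simp: sc_add_def sc_zero_def sc_scal_def)
  show "a - b = a + - b" by transfer simp
  show "a * b * c = a * (b * c)" by transfer (rule sc_mult_assoc)
  show "1 * a = a" by transfer (rule sc_mult_one_left)
  show "a * 1 = a" by transfer (rule sc_mult_one_right)
  show "(a + b) * c = a * c + b * c" by transfer (rule sc_mult_add_left)
  show "a * (b + c) = a * b + a * c" by transfer (rule sc_mult_add_right)
  show "(0::'a salg) \<noteq> 1"
  proof transfer
    have "sc_zero (0, {}) \<noteq> (sc_one (0, {}) :: 'a)" by (simp add: sc_zero_def sc_one_def)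
    then show "(sc_zero :: 'a sc) \<noteq> sc_one" by metis
  qed
qed

end

lemma salg_eqI:
  fixes x y :: "'k::comm_ring_1 salg"
  assumes "\<And>m S. finite S \<Longrightarrow> coeffs x (m, S) = coeffs y (m, S)"
  shows "x = y"
proof -
  have "coeffs x = coeffs y"
  proof (rule ext, clarify)
    fix m and S :: "nat set"
    show "coeffs x (m, S) = coeffs y (m, S)"
      using assms sc_regD[OF coeffs[of x]] sc_regD[OF coeffs[of y]] by (cases "finite S") simp_all
  qed
  then show ?thesis by (simp add: coeffs_inject)
qed

lemma coeffs_mult_nonzero:
  assumes "coeffs (x * y) (m, S) \<noteq> 0"
  obtains a T b U where "a + b = m" "T \<union> U = S" "T \<inter> U = {}"
    "coeffs x (a, T) \<noteq> 0" "coeffs y (b, U) \<noteq> 0"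
proof -
  from assms
  have "(\<Sum>((a, T), (b, U)) \<in> smono_splits m S. gsign T U * coeffs x (a, T) * coeffs y (b, U)) \<noteq> 0"
    unfolding times_salg.rep_eq sc_mult_apply .
  then obtain a T b U where split: "((a, T), (b, U)) \<in> smono_splits m S"
    and nonzero: "gsign T U * coeffs x (a, T) * coeffs y (b, U) \<noteq> 0"
    by (auto elim!: sum.not_neutral_contains_not_neutral)
  from nonzero have "coeffs x (a, T) \<noteq> 0" "coeffs y (b, U) \<noteq> 0" by auto
  with split show ?thesis using that unfolding smono_splits_def by blast
qed

definition xvar :: "nat \<Rightarrow> 'k::comm_ring_1 salg" where "xvar i = Abs_salg (xv i)"
definition yvar :: "nat \<Rightarrow> 'k::comm_ring_1 salg" where "yvar j = Abs_salg (yv j)"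

lemma coeffs_xvar: "coeffs (xvar i) = xv i"
  unfolding xvar_def by (rule Abs_salg_inverse[OF sc_reg_xv])

lemma coeffs_yvar: "coeffs (yvar i) = yv i"
  unfolding yvar_def by (rule Abs_salg_inverse[OF sc_reg_yv])

lemma coeffs_yvar_mult:
  fixes z :: "'k::comm_ring_1 salg"
  assumes S: "finite S"
  shows "coeffs (yvar a * z) (m, S) = (if a \<in> S then gsign {a} (S - {a}) * coeffs z (m, S - {a}) else 0)"
proof (cases "a \<in> S")
  case True
  have "coeffs (yvar a * z) (m, S)
      = (\<lambda>((a', T), (b, U)). gsign T U * yv a (a', T) * coeffs z (b, U)) ((0, {a}), (m, S - {a}))"
    unfolding times_salg.rep_eq sc_mult_apply coeffs_yvar
  proof (rule sum_eq_single[OF finite_smono_splits[OF S]])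
    show "((0, {a}), (m, S - {a})) \<in> smono_splits m S" using True by (auto simp: smono_splits_def)
  next
    fix y assume y: "y \<in> smono_splits m S" "y \<noteq> ((0, {a}), (m, S - {a}))"
    obtain a' T b U where y_eq: "y = ((a', T), (b, U))" by (cases y) auto
    have "yv a (a', T) = (0::'k)"
    proof (rule ccontr)
      assume "yv a (a', T) \<noteq> (0::'k)"
      then have "a' = 0" "T = {a}" by (auto simp: yv_def split: if_splits)
      with y y_eq show False by (auto simp: smono_splits_def)
    qed
    then show "(\<lambda>((a', T), (b, U)). gsign T U * yv a (a', T) * coeffs z (b, U)) y = 0"
      using y_eq by simp
  qed
  then show ?thesis using True by (simp add: yv_def)
next
  case False
  have "coeffs (yvar a * z) (m, S) = 0"
    unfolding times_salg.rep_eq sc_mult_apply coeffs_yvar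
    by (rule sum.neutral) (use False in \<open>auto simp: smono_splits_def yv_def\<close>)
  then show ?thesis using False by simp
qed

lemma yvar_square: "(yvar a * yvar a :: 'k::comm_ring_1 salg) = 0"
proof (rule salg_eqI)
  fix m and S :: "nat set" assume S: "finite S"
  have "yv a (m, S - {a}) = (0::'k)" by (auto simp: yv_def)
  then show "coeffs (yvar a * yvar a) (m, S) = coeffs (0::'k salg) (m, S)"
    by (simp add: coeffs_yvar_mult[OF S] coeffs_yvar zero_salg.rep_eq sc_zero_def)
qed

lemma yvar_anticommute:
  assumes "a \<noteq> b"
  shows "(yvar a * yvar b :: 'k::comm_ring_1 salg) = - (yvar b * yvar a)"
proof (rule salg_eqI)
  fix m and S :: "nat set" assume S: "finite S"
  show "coeffs (yvar a * yvar b :: 'k salg) (m, S) = coeffs (- (yvar b * yvar a)) (m, S)"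
  proof (cases "S = {a, b}")
    case True
    then have "S - {a} = {b}" "S - {b} = {a}" "a \<in> S" "b \<in> S" using assms by auto
    then show ?thesis unfolding uminus_salg.rep_eq using assms
      by (cases "a < b") (simp_all add: coeffs_yvar_mult[OF S] coeffs_yvar yv_def sc_scal_def gsign_singletons)
  next
    case False
    then have "a \<in> S \<Longrightarrow> yv b (m, S - {a}) = (0::'k)" and "b \<in> S \<Longrightarrow> yv a (m, S - {b}) = (0::'k)"
      using assms by (auto simp: yv_def)
    then show ?thesis
      unfolding uminus_salg.rep_eq sc_scal_def coeffs_yvar_mult[OF S] coeffs_yvar by simp
  qed
qed

lemma coeffs_zero: "coeffs 0 = sc_zero" by (rule zero_salg.rep_eq)
lemma coeffs_one: "coeffs 1 = sc_one" by (rule one_salg.rep_eq)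
lemma coeffs_plus: "coeffs (x + y) = sc_add (coeffs x) (coeffs y)" by (rule plus_salg.rep_eq)
lemma coeffs_uminus: "coeffs (- x) = sc_scal (-1) (coeffs x)" by (rule uminus_salg.rep_eq)

definition is_xpoly :: "'k::comm_ring_1 salg \<Rightarrow> bool" where
  "is_xpoly x \<longleftrightarrow> (\<forall>m S. coeffs x (m, S) \<noteq> 0 \<longrightarrow> S = {})"

lemma is_xpoly_central:
  assumes "is_xpoly x"
  shows "x * z = z * x"
proof (rule salg_eqI)
  fix m and S :: "nat set"
  have vanish: "coeffs x (b, U) = 0" if "U \<noteq> {}" for b U
    using assms that unfolding is_xpoly_def by auto
  have "coeffs (x * z) (m, S)
      = (\<Sum>((a, T), (b, U)) \<in> smono_splits m S. gsign U T * coeffs x (b, U) * coeffs z (a, T))"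
    unfolding times_salg.rep_eq sc_mult_apply
    by (rule sum.reindex_bij_witness[where i = "\<lambda>((a, T), (b, U)). ((b, U), (a, T))"
          and j = "\<lambda>((a, T), (b, U)). ((b, U), (a, T))"])
      (auto simp: smono_splits_def add.commute)
  also have "\<dots> = (\<Sum>((a, T), (b, U)) \<in> smono_splits m S. gsign T U * coeffs z (a, T) * coeffs x (b, U))"
  proof (rule sum.cong[OF refl], clarify)
    fix a T b U
    show "gsign U T * coeffs x (b, U) * coeffs z (a, T) = gsign T U * coeffs z (a, T) * coeffs x (b, U)"
      by (cases "U = {}") (simp_all add: vanish)
  qed
  also have "\<dots> = coeffs (z * x) (m, S)"
    unfolding times_salg.rep_eq sc_mult_apply ..
  finally show "coeffs (x * z) (m, S) = coeffs (z * x) (m, S)" .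
qed

lemma is_xpoly_zero [simp]: "is_xpoly 0"
  and is_xpoly_one [simp]: "is_xpoly 1"
  by (simp_all add: is_xpoly_def coeffs_zero coeffs_one sc_zero_def sc_one_def)

lemma is_xpoly_add [simp]: "is_xpoly x \<Longrightarrow> is_xpoly y \<Longrightarrow> is_xpoly (x + y)"
  unfolding is_xpoly_def coeffs_plus sc_add_def by (metis add.left_neutral)

lemma is_xpoly_uminus [simp]: "is_xpoly x \<Longrightarrow> is_xpoly (- x)"
  by (simp add: is_xpoly_def coeffs_uminus sc_scal_def)

lemma is_xpoly_diff [simp]: "is_xpoly x \<Longrightarrow> is_xpoly y \<Longrightarrow> is_xpoly (x - y)"
  unfolding diff_conv_add_uminus by (intro is_xpoly_add is_xpoly_uminus)

lemma is_xpoly_mult [simp]: "is_xpoly x \<Longrightarrow> is_xpoly y \<Longrightarrow> is_xpoly (x * y)"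
  unfolding is_xpoly_def by (metis coeffs_mult_nonzero sup_bot.right_neutral)

lemma is_xpoly_xvar [simp]: "is_xpoly (xvar i)"
  by (simp add: is_xpoly_def coeffs_xvar xv_def)

text \<open>Only the odd variables 0..3 ever occur, so \<open>odd_ge 5\<close> forces an element to vanish.\<close>

definition odd_ge :: "nat \<Rightarrow> 'k::comm_ring_1 salg \<Rightarrow> bool" where
  "odd_ge k x \<longleftrightarrow> (\<forall>m S. coeffs x (m, S) \<noteq> 0 \<longrightarrow> S \<subseteq> {..3} \<and> k \<le> card S)"

lemma odd_ge_zero [simp]: "odd_ge k 0"
  by (simp add: odd_ge_def coeffs_zero sc_zero_def)

lemma odd_ge_add: "odd_ge k x \<Longrightarrow> odd_ge k y \<Longrightarrow> odd_ge k (x + y)"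
  unfolding odd_ge_def coeffs_plus sc_add_def by (metis add.left_neutral)

lemma odd_ge_uminus: "odd_ge k x \<Longrightarrow> odd_ge k (- x)"
  by (simp add: odd_ge_def coeffs_uminus sc_scal_def)

lemma odd_ge_diff: "odd_ge k x \<Longrightarrow> odd_ge k y \<Longrightarrow> odd_ge k (x - y)"
  unfolding diff_conv_add_uminus by (intro odd_ge_add odd_ge_uminus)

lemma odd_ge_mult:
  assumes "odd_ge a x" "odd_ge b y" "c \<le> a + b"
  shows "odd_ge c (x * y)"
  unfolding odd_ge_def
proof (intro allI impI)
  fix m S assume "coeffs (x * y) (m, S) \<noteq> 0"
  then obtain p T q U where split: "T \<union> U = S" "T \<inter> U = {}"
    and nonzero: "coeffs x (p, T) \<noteq> 0" "coeffs y (q, U) \<noteq> 0"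
    by (rule coeffs_mult_nonzero)
  with assms have "T \<subseteq> {..3}" "a \<le> card T" "U \<subseteq> {..3}" "b \<le> card U"
    unfolding odd_ge_def by auto
  moreover from this have "finite T" "finite U" by (auto intro: finite_subset)
  ultimately show "S \<subseteq> {..3} \<and> c \<le> card S" using split assms(3) by (auto simp: card_Un_disjoint)
qed

lemma odd_ge_five_eq_zero:
  assumes "odd_ge k x" "5 \<le> k"
  shows "x = 0"
proof (rule salg_eqI)
  fix m and S :: "nat set"
  have "coeffs x (m, S) = 0"
  proof (rule ccontr)
    assume "coeffs x (m, S) \<noteq> 0"
    then have "S \<subseteq> {..3}" "k \<le> card S" using assms unfolding odd_ge_def by auto
    then have "card S \<le> 4" using card_mono[of "{..3::nat}" S] by auto
    then show False using assms \<open>k \<le> card S\<close> by simp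
  qed
  then show "coeffs x (m, S) = coeffs 0 (m, S)" by (simp add: coeffs_zero sc_zero_def)
qed

lemma odd_ge_yvar: "k \<le> 3 \<Longrightarrow> odd_ge 1 (yvar k)"
  unfolding odd_ge_def coeffs_yvar yv_def by auto

lemma odd_ge_is_xpoly: "is_xpoly x \<Longrightarrow> odd_ge 0 x"
  unfolding is_xpoly_def odd_ge_def by auto

text \<open>Each of the seven cross terms has odd degree at least \<open>a + b + c + 2 \<ge> 5\<close>.\<close>

lemma triple_product_eq_leading:
  assumes "odd_ge a x0" "odd_ge (a + 2) (x - x0)" "odd_ge b y0" "odd_ge (b + 2) (y - y0)"
    "odd_ge c z0" "odd_ge (c + 2) (z - z0)" "3 \<le> a + b + c"
  shows "x * (y * z) = x0 * (y0 * z0)"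
proof -
  have vanish: "u * (v * w) = 0" if "odd_ge i u" "odd_ge j v" "odd_ge k w" "5 \<le> i + j + k"
    for u v w :: "'a salg" and i j k
    using odd_ge_five_eq_zero[OF odd_ge_mult[OF that(1) odd_ge_mult[OF that(2,3) order.refl]]] that(4)
    by (simp add: add.assoc)
  define xr yr zr where "xr = x - x0" and "yr = y - y0" and "zr = z - z0"
  have "x * (y * z) = (x0 + xr) * ((y0 + yr) * (z0 + zr))" by (simp add: xr_def yr_def zr_def)
  also have "\<dots> = x0 * (y0 * z0) + x0 * (y0 * zr) + x0 * (yr * z0) + x0 * (yr * zr)
     + xr * (y0 * z0) + xr * (y0 * zr) + xr * (yr * z0) + xr * (yr * zr)"
    by (simp add: algebra_simps)
  also have "\<dots> = x0 * (y0 * z0)"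
    using assms unfolding xr_def[symmetric] yr_def[symmetric] zr_def[symmetric]
    by (simp add: vanish)
  finally show ?thesis .
qed

typedef (overloaded) ('k::comm_ring_1) xpoly = "{x :: 'k salg. is_xpoly x}"
  morphisms \<iota> Abs_xpoly
  by (rule exI[of _ 0]) simp

setup_lifting type_definition_xpoly

instantiation xpoly :: (comm_ring_1) comm_ring_1
begin

lift_definition zero_xpoly :: "'a xpoly" is 0 by simp
lift_definition one_xpoly :: "'a xpoly" is 1 by simp
lift_definition plus_xpoly :: "'a xpoly \<Rightarrow> 'a xpoly \<Rightarrow> 'a xpoly" is "(+)" by simp
lift_definition uminus_xpoly :: "'a xpoly \<Rightarrow> 'a xpoly" is uminus by simp
lift_definition minus_xpoly :: "'a xpoly \<Rightarrow> 'a xpoly \<Rightarrow> 'a xpoly" is "(-)" by simp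
lift_definition times_xpoly :: "'a xpoly \<Rightarrow> 'a xpoly \<Rightarrow> 'a xpoly" is "(*)" by simp

instance
proof
  fix a b c :: "'a xpoly"
  show "a * b * c = a * (b * c)" by transfer (simp add: mult.assoc)
  show "a * b = b * a" by transfer (metis is_xpoly_central)
  show "1 * a = a" by transfer simp
  show "(a + b) * c = a * c + b * c" by transfer (simp add: distrib_right)
  show "a + b + c = a + (b + c)" by transfer (simp add: add.assoc)
  show "a + b = b + a" by transfer (simp add: add.commute)
  show "0 + a = a" by transfer simp
  show "- a + a = 0" by transfer simp
  show "a - b = a + - b" by transfer simp
  show "(0::'a xpoly) \<noteq> 1" by transfer simp
qed

end

lemma \<iota>_add: "\<iota> (p + q) = \<iota> p + \<iota> q" by (rule plus_xpoly.rep_eq)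
lemma \<iota>_mult: "\<iota> (p * q) = \<iota> p * \<iota> q" by (rule times_xpoly.rep_eq)
lemma \<iota>_diff: "\<iota> (p - q) = \<iota> p - \<iota> q" by (rule minus_xpoly.rep_eq)
lemma \<iota>_uminus: "\<iota> (- p) = - \<iota> p" by (rule uminus_xpoly.rep_eq)
lemma \<iota>_zero: "\<iota> 0 = 0" by (rule zero_xpoly.rep_eq)
lemma \<iota>_one: "\<iota> 1 = 1" by (rule one_xpoly.rep_eq)

lemma odd_ge_\<iota>: "odd_ge 0 (\<iota> p)"
  using \<iota>[of p] by (simp add: odd_ge_is_xpoly)

lemma mult_\<iota>_commute: "z * \<iota> p = \<iota> p * z"
  using \<iota>[of p] by (simp add: is_xpoly_central)

lemma mult_\<iota>_left_commute: "z * (\<iota> p * w) = \<iota> p * (z * w)"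
  by (simp only: mult.assoc[symmetric] mult_\<iota>_commute)

text \<open>Instances of the two rules above that are safe as simplification rules; together with
  the sign rules for the odd variables they bring products into a normal form.\<close>

lemma yvar_mult_\<iota>: "yvar k * \<iota> p = \<iota> p * yvar k"
  by (rule mult_\<iota>_commute)

lemma yvar_mult_\<iota>_left: "yvar k * (\<iota> p * z) = \<iota> p * (yvar k * z)"
  by (rule mult_\<iota>_left_commute)

lemma \<iota>_mult_commute: "\<iota> p * \<iota> q = \<iota> q * \<iota> p"
  by (rule mult_\<iota>_commute)

lemma \<iota>_mult_left_commute: "\<iota> p * (\<iota> q * z) = \<iota> q * (\<iota> p * z)"
  by (rule mult_\<iota>_left_commute)

lemma yvar_swap: "a < b \<Longrightarrow> (yvar b * yvar a :: 'k::comm_ring_1 salg) = - (yvar a * yvar b)"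
  using yvar_anticommute[of b a] by simp

lemma yvar_swap_left: "a < b \<Longrightarrow> (yvar b * (yvar a * z) :: 'k::comm_ring_1 salg) = - (yvar a * (yvar b * z))"
  by (simp only: mult.assoc[symmetric] yvar_swap) simp

lemma yvar_square_left: "(yvar a * (yvar a * z) :: 'k::comm_ring_1 salg) = 0"
  by (simp only: mult.assoc[symmetric] yvar_square) simp

lemmas salg_normalize = yvar_swap yvar_swap_left yvar_square_left yvar_square
  yvar_mult_\<iota> yvar_mult_\<iota>_left \<iota>_mult_commute \<iota>_mult_left_commute
  \<iota>_add \<iota>_mult \<iota>_diff \<iota>_uminus
  distrib_left distrib_right left_diff_distrib right_diff_distrib mult.assoc mult_minus_left mult_minus_right

definition xpvar :: "nat \<Rightarrow> 'k::comm_ring_1 xpoly" where "xpvar i = Abs_xpoly (xvar i)"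

lemma \<iota>_xpvar: "\<iota> (xpvar i) = xvar i"
  unfolding xpvar_def by (simp add: Abs_xpoly_inverse)

definition xconst :: "'k::comm_ring_1 \<Rightarrow> 'k xpoly" where
  "xconst c = Abs_xpoly (Abs_salg (sc_scal c sc_one))"

lemma \<iota>_xconst: "\<iota> (xconst c) = Abs_salg (sc_scal c sc_one)"
proof -
  have "coeffs (Abs_salg (sc_scal c sc_one)) = sc_scal c sc_one"
    by (simp add: Abs_salg_inverse sc_reg_one sc_reg_scal)
  then have "is_xpoly (Abs_salg (sc_scal c sc_one))"
    unfolding is_xpoly_def by (simp add: sc_scal_def sc_one_def)
  then show ?thesis unfolding xconst_def by (simp add: Abs_xpoly_inverse)
qed

lemma xconst_minus_one: "xconst (-1) = (-1 :: 'k::comm_ring_1 xpoly)"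
proof -
  have "\<iota> (xconst (-1)) = (- 1 :: 'k salg)"
    unfolding \<iota>_xconst by (simp add: uminus_salg.abs_eq one_salg_def eq_onp_same_args sc_reg_one)
  then have "\<iota> (xconst (-1)) = (\<iota> (-1) :: 'k salg)" by (simp add: \<iota>_uminus \<iota>_one)
  then show ?thesis by (simp only: \<iota>_inject)
qed

definition reg_mat :: "'k::comm_ring_1 mat2 \<Rightarrow> bool" where
  "reg_mat A \<longleftrightarrow> (\<forall>i j. A i j \<in> sc_reg)"

definition entry :: "'k::comm_ring_1 mat2 \<Rightarrow> bool \<Rightarrow> bool \<Rightarrow> 'k salg" where
  "entry A i j = Abs_salg (A i j)"

lemma reg_mat_eqI: "reg_mat A \<Longrightarrow> reg_mat B \<Longrightarrow> (\<And>i j. entry A i j = entry B i j) \<Longrightarrow> A = B"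
  unfolding reg_mat_def entry_def by (metis Abs_salg_inject ext)

lemma reg_mat_madd: "reg_mat A \<Longrightarrow> reg_mat B \<Longrightarrow> reg_mat (madd A B)"
  unfolding reg_mat_def madd_def by (simp add: sc_reg_add)

lemma reg_mat_mmul: "reg_mat A \<Longrightarrow> reg_mat B \<Longrightarrow> reg_mat (mmul A B)"
  unfolding reg_mat_def mmul_def by (simp add: sc_reg_add sc_reg_mult)

lemma reg_mat_mscal: "reg_mat A \<Longrightarrow> reg_mat (mscal c A)"
  unfolding reg_mat_def mscal_def by (simp add: sc_reg_scal)

lemma reg_mat_mcomm: "reg_mat A \<Longrightarrow> reg_mat B \<Longrightarrow> reg_mat (mcomm A B)"
  unfolding mcomm_def by (intro reg_mat_madd reg_mat_mmul reg_mat_mscal)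

lemma reg_mat_mone: "reg_mat mone"
  unfolding reg_mat_def mone_def by (simp add: sc_reg_one sc_reg_zero)

lemma reg_mat_C1: "reg_mat C1" and reg_mat_C2: "reg_mat C2"
  unfolding reg_mat_def C1_def C2_def mk2_def by (simp_all add: sc_reg_xv sc_reg_yv)

lemma reg_mat_genC: "reg_mat (genC b)"
  unfolding genC_def by (simp add: reg_mat_C1 reg_mat_C2)

lemma reg_mat_genF: "A \<in> genF \<Longrightarrow> reg_mat A"
  by (induction rule: genF.induct)
    (auto intro: reg_mat_madd reg_mat_mmul reg_mat_mscal reg_mat_mone reg_mat_C1 reg_mat_C2)

lemma Abs_salg_add: "a \<in> sc_reg \<Longrightarrow> b \<in> sc_reg \<Longrightarrow> Abs_salg (sc_add a b) = Abs_salg a + Abs_salg b"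
  by (simp add: plus_salg.abs_eq eq_onp_same_args)

lemma Abs_salg_mult: "a \<in> sc_reg \<Longrightarrow> b \<in> sc_reg \<Longrightarrow> Abs_salg (sc_mult a b) = Abs_salg a * Abs_salg b"
  by (simp add: times_salg.abs_eq eq_onp_same_args)

lemma Abs_salg_scal: "a \<in> sc_reg \<Longrightarrow> Abs_salg (sc_scal c a) = \<iota> (xconst c) * Abs_salg a"
  unfolding \<iota>_xconst
  by (simp add: Abs_salg_mult[symmetric] sc_reg_one sc_reg_scal sc_mult_scal_left sc_mult_one_left)

lemma entry_madd: "reg_mat A \<Longrightarrow> reg_mat B \<Longrightarrow> entry (madd A B) i j = entry A i j + entry B i j"
  unfolding reg_mat_def entry_def madd_def by (simp add: Abs_salg_add)

lemma entry_mmul: "reg_mat A \<Longrightarrow> reg_mat B \<Longrightarrow>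
    entry (mmul A B) i j = entry A i False * entry B False j + entry A i True * entry B True j"
  unfolding reg_mat_def entry_def mmul_def by (simp add: Abs_salg_add Abs_salg_mult sc_reg_mult)

lemma entry_mscal: "reg_mat A \<Longrightarrow> entry (mscal c A) i j = \<iota> (xconst c) * entry A i j"
  unfolding reg_mat_def entry_def mscal_def by (simp add: Abs_salg_scal)

lemma entry_mcomm: "reg_mat A \<Longrightarrow> reg_mat B \<Longrightarrow>
    entry (mcomm A B) i j = entry (mmul A B) i j - entry (mmul B A) i j"
  unfolding mcomm_def
  by (simp add: entry_madd reg_mat_mmul reg_mat_mscal entry_mscal xconst_minus_one \<iota>_uminus \<iota>_one)

lemma entry_mone: "entry mone i j = (if i = j then 1 else 0)"
  unfolding entry_def mone_def by (simp add: zero_salg_def one_salg_def)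

definition mzero :: "'k::comm_ring_1 mat2" where
  "mzero = (\<lambda>i j. sc_zero)"

lemma reg_mat_mzero: "reg_mat mzero"
  unfolding reg_mat_def mzero_def by (simp add: sc_reg_zero)

lemma entry_mzero: "entry mzero i j = 0"
  unfolding entry_def mzero_def by (simp add: zero_salg_def)

lemma entry_C1: "entry C1 False False = \<iota> (xpvar 0)" "entry C1 False True = yvar 0"
  "entry C1 True False = yvar 2" "entry C1 True True = \<iota> (xpvar 2)"
  unfolding entry_def C1_def mk2_def \<iota>_xpvar xvar_def yvar_def by simp_all

lemma entry_C2: "entry C2 False False = \<iota> (xpvar 1)" "entry C2 False True = yvar 1"
  "entry C2 True False = yvar 3" "entry C2 True True = \<iota> (xpvar 3)"
  unfolding entry_def C2_def mk2_def \<iota>_xpvar xvar_def yvar_def by simp_all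

definition ytop :: "bool \<Rightarrow> nat" where "ytop b = (if b then 1 else 0)"
definition ybot :: "bool \<Rightarrow> nat" where "ybot b = (if b then 3 else 2)"

lemma ytop_le [simp]: "ytop b \<le> 3" and ybot_le [simp]: "ybot b \<le> 3"
  unfolding ytop_def ybot_def by simp_all

lemma entry_genC: "entry (genC b) False False = \<iota> (xpvar (ytop b))" "entry (genC b) False True = yvar (ytop b)"
  "entry (genC b) True False = yvar (ybot b)" "entry (genC b) True True = \<iota> (xpvar (ybot b))"
  unfolding genC_def ytop_def ybot_def by (cases b; simp add: entry_C1 entry_C2)+

section \<open>The shape of elements of F\<close>

definition E0 :: "'k::comm_ring_1 xpoly" where "E0 = xpvar 0 - xpvar 2"
definition E1 :: "'k::comm_ring_1 xpoly" where "E1 = xpvar 1 - xpvar 3"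

definition odd12 :: "'k::comm_ring_1 xpoly \<Rightarrow> 'k xpoly \<Rightarrow> 'k salg" where
  "odd12 g0 g1 = \<iota> g0 * yvar 0 + \<iota> g1 * yvar 1"

definition odd21 :: "'k::comm_ring_1 xpoly \<Rightarrow> 'k xpoly \<Rightarrow> 'k xpoly \<Rightarrow> 'k salg" where
  "odd21 g0 g1 t = \<iota> (g0 - E1 * t) * yvar 2 + \<iota> (g1 + E0 * t) * yvar 3"

definition F_form :: "'k::comm_ring_1 mat2 \<Rightarrow> bool" where
  "F_form A \<longleftrightarrow> reg_mat A \<and> (\<exists>f ga gb t ra rd rb rc.
     entry A False False = \<iota> (f + E0 * ga + E1 * gb) + ra \<and> entry A True True = \<iota> f + rd \<and>
     entry A False True = odd12 ga gb + rb \<and> entry A True False = odd21 ga gb t + rc \<and>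
     odd_ge 2 ra \<and> odd_ge 2 rd \<and> odd_ge 3 rb \<and> odd_ge 3 rc)"

lemma F_formI:
  assumes "reg_mat A"
    "entry A False False = \<iota> (f + E0 * ga + E1 * gb) + ra" "entry A True True = \<iota> f + rd"
    "entry A False True = odd12 ga gb + rb" "entry A True False = odd21 ga gb t + rc"
    "odd_ge 2 ra" "odd_ge 2 rd" "odd_ge 3 rb" "odd_ge 3 rc"
  shows "F_form A"
  unfolding F_form_def using assms by blast

lemma F_formE:
  assumes "F_form A"
  obtains f ga gb t ra rd rb rc where "reg_mat A"
    "entry A False False = \<iota> (f + E0 * ga + E1 * gb) + ra" "entry A True True = \<iota> f + rd"
    "entry A False True = odd12 ga gb + rb" "entry A True False = odd21 ga gb t + rc"
    "odd_ge 2 ra" "odd_ge 2 rd" "odd_ge 3 rb" "odd_ge 3 rc"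
  using assms unfolding F_form_def by blast

lemma odd_ge_\<iota>_left: "odd_ge k y \<Longrightarrow> odd_ge k (\<iota> p * y)"
  using odd_ge_mult[OF odd_ge_\<iota>, of k y k] by simp

lemma odd_ge_\<iota>_right: "odd_ge k y \<Longrightarrow> odd_ge k (y * \<iota> p)"
  using odd_ge_mult[OF _ odd_ge_\<iota>, of k y k] by simp

lemma odd_ge_odd12: "odd_ge 1 (odd12 g0 g1)"
  unfolding odd12_def by (intro odd_ge_add odd_ge_\<iota>_left odd_ge_yvar) simp_all

lemma odd_ge_odd21: "odd_ge 1 (odd21 g0 g1 t)"
  unfolding odd21_def by (intro odd_ge_add odd_ge_\<iota>_left odd_ge_yvar) simp_all

lemma F_form_mone: "F_form mone"
  by (rule F_formI[where f = 1 and ga = 0 and gb = 0 and t = 0 and ra = 0 and rd = 0 and rb = 0 and rc = 0])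
    (simp_all add: reg_mat_mone entry_mone odd12_def odd21_def \<iota>_zero \<iota>_one)

lemma F_form_C1: "F_form C1"
  by (rule F_formI[where f = "xpvar 2" and ga = 1 and gb = 0 and t = 0 and ra = 0 and rd = 0 and rb = 0 and rc = 0])
    (simp_all add: reg_mat_C1 entry_C1 odd12_def odd21_def E0_def \<iota>_one \<iota>_zero)

lemma F_form_C2: "F_form C2"
  by (rule F_formI[where f = "xpvar 3" and ga = 0 and gb = 1 and t = 0 and ra = 0 and rd = 0 and rb = 0 and rc = 0])
    (simp_all add: reg_mat_C2 entry_C2 odd12_def odd21_def E1_def \<iota>_one \<iota>_zero)

lemma F_form_madd:
  assumes "F_form A" "F_form B"
  shows "F_form (madd A B)"
proof -
  obtain f g0 g1 t r11 r22 r12 r21 where A: "reg_mat A"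
    "entry A False False = \<iota> (f + E0 * g0 + E1 * g1) + r11" "entry A True True = \<iota> f + r22"
    "entry A False True = odd12 g0 g1 + r12" "entry A True False = odd21 g0 g1 t + r21"
    "odd_ge 2 r11" "odd_ge 2 r22" "odd_ge 3 r12" "odd_ge 3 r21"
    using assms(1) by (rule F_formE)
  obtain f' g0' g1' t' r11' r22' r12' r21' where B: "reg_mat B"
    "entry B False False = \<iota> (f' + E0 * g0' + E1 * g1') + r11'" "entry B True True = \<iota> f' + r22'"
    "entry B False True = odd12 g0' g1' + r12'" "entry B True False = odd21 g0' g1' t' + r21'"
    "odd_ge 2 r11'" "odd_ge 2 r22'" "odd_ge 3 r12'" "odd_ge 3 r21'"
    using assms(2) by (rule F_formE)
  show ?thesis
    by (rule F_formI[where f = "f + f'" and ga = "g0 + g0'" and gb = "g1 + g1'" and t = "t + t'"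
        and ra = "r11 + r11'" and rd = "r22 + r22'" and rb = "r12 + r12'" and rc = "r21 + r21'"])
      (simp_all add: A B reg_mat_madd entry_madd odd_ge_add odd12_def odd21_def salg_normalize)
qed

lemma F_form_mscal:
  assumes "F_form A"
  shows "F_form (mscal c A)"
proof -
  obtain f g0 g1 t r11 r22 r12 r21 where A: "reg_mat A"
    "entry A False False = \<iota> (f + E0 * g0 + E1 * g1) + r11" "entry A True True = \<iota> f + r22"
    "entry A False True = odd12 g0 g1 + r12" "entry A True False = odd21 g0 g1 t + r21"
    "odd_ge 2 r11" "odd_ge 2 r22" "odd_ge 3 r12" "odd_ge 3 r21"
    using assms by (rule F_formE)
  let ?k = "xconst c"
  show ?thesis
    by (rule F_formI[where f = "?k * f" and ga = "?k * g0" and gb = "?k * g1" and t = "?k * t"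
        and ra = "\<iota> ?k * r11" and rd = "\<iota> ?k * r22" and rb = "\<iota> ?k * r12" and rc = "\<iota> ?k * r21"])
      (simp_all add: A reg_mat_mscal entry_mscal odd_ge_\<iota>_left odd12_def odd21_def salg_normalize)
qed

lemma F_form_mmul:
  assumes "F_form A" "F_form B"
  shows "F_form (mmul A B)"
proof -
  obtain f g0 g1 t r11 r22 r12 r21 where A: "reg_mat A"
    "entry A False False = \<iota> (f + E0 * g0 + E1 * g1) + r11" "entry A True True = \<iota> f + r22"
    "entry A False True = odd12 g0 g1 + r12" "entry A True False = odd21 g0 g1 t + r21"
    "odd_ge 2 r11" "odd_ge 2 r22" "odd_ge 3 r12" "odd_ge 3 r21"
    using assms(1) by (rule F_formE)
  obtain f' g0' g1' t' r11' r22' r12' r21' where B: "reg_mat B"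
    "entry B False False = \<iota> (f' + E0 * g0' + E1 * g1') + r11'" "entry B True True = \<iota> f' + r22'"
    "entry B False True = odd12 g0' g1' + r12'" "entry B True False = odd21 g0' g1' t' + r21'"
    "odd_ge 2 r11'" "odd_ge 2 r22'" "odd_ge 3 r12'" "odd_ge 3 r21'"
    using assms(2) by (rule F_formE)
  define FA where "FA = f + E0 * g0 + E1 * g1"
  define FB where "FB = f' + E0 * g0' + E1 * g1'"
  define g0'' where "g0'' = FA * g0' + g0 * f'"
  define g1'' where "g1'' = FA * g1' + g1 * f'"
  define t'' where "t'' = t * FB + f * t' - (g0 * g1' - g1 * g0')"
  define s11 where "s11 = \<iota> FA * r11' + r11 * \<iota> FB + r11 * r11' + odd12 g0 g1 * odd21 g0' g1' t'
     + odd12 g0 g1 * r21' + r12 * odd21 g0' g1' t' + r12 * r21'"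
  define s22 where "s22 = odd21 g0 g1 t * odd12 g0' g1' + odd21 g0 g1 t * r12' + r21 * odd12 g0' g1'
     + r21 * r12' + \<iota> f * r22' + r22 * \<iota> f' + r22 * r22'"
  define s12 where "s12 = \<iota> FA * r12' + r11 * odd12 g0' g1' + r11 * r12' + odd12 g0 g1 * r22'
     + r12 * \<iota> f' + r12 * r22'"
  define s21 where "s21 = odd21 g0 g1 t * r11' + r21 * \<iota> FB + r21 * r11' + \<iota> f * r21'
     + r22 * odd21 g0' g1' t' + r22 * r21'"
  note commute_remainders = mult_\<iota>_commute[of r11] mult_\<iota>_commute[of r22] mult_\<iota>_commute[of r12]
    mult_\<iota>_commute[of r21] mult_\<iota>_commute[of r11'] mult_\<iota>_commute[of r22']
    mult_\<iota>_commute[of r12'] mult_\<iota>_commute[of r21']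
    mult_\<iota>_left_commute[of r11] mult_\<iota>_left_commute[of r22] mult_\<iota>_left_commute[of r12]
    mult_\<iota>_left_commute[of r21] mult_\<iota>_left_commute[of r11'] mult_\<iota>_left_commute[of r22']
    mult_\<iota>_left_commute[of r12'] mult_\<iota>_left_commute[of r21']
  note entries = entry_mmul[OF A(1) B(1)] A(2-5) B(2-5)
  have "entry (mmul A B) False False = \<iota> (f * f' + E0 * g0'' + E1 * g1'') + s11"
    unfolding entries s11_def g0''_def g1''_def FA_def FB_def
    by (simp add: odd12_def odd21_def salg_normalize add_ac commute_remainders)
  moreover have "entry (mmul A B) True True = \<iota> (f * f') + s22"
    unfolding entries s22_def
    by (simp add: odd12_def odd21_def salg_normalize add_ac commute_remainders)
  moreover have "entry (mmul A B) False True = odd12 g0'' g1'' + s12"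
    unfolding entries s12_def g0''_def g1''_def FA_def FB_def
    by (simp add: odd12_def odd21_def salg_normalize add_ac commute_remainders)
  moreover have "entry (mmul A B) True False = odd21 g0'' g1'' t'' + s21"
    unfolding entries s21_def g0''_def g1''_def FA_def FB_def t''_def
    by (simp add: odd12_def odd21_def salg_normalize add_ac commute_remainders)
  moreover have "odd_ge 2 s11" "odd_ge 2 s22" "odd_ge 3 s12" "odd_ge 3 s21"
    unfolding s11_def s22_def s12_def s21_def
    by (intro odd_ge_add odd_ge_\<iota>_left odd_ge_\<iota>_right;
        ((rule odd_ge_mult, (rule A(6-9) B(6-9) odd_ge_odd12 odd_ge_odd21)+, simp) | rule A(6-9) B(6-9))+)+
  ultimately show ?thesis by (intro F_formI reg_mat_mmul A(1) B(1))
qed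

lemma F_form_genF: "A \<in> genF \<Longrightarrow> F_form A"
  by (induction rule: genF.induct)
    (simp_all add: F_form_mone F_form_C1 F_form_C2 F_form_madd F_form_mmul F_form_mscal)

section \<open>Commutators with a generator\<close>

definition Ediff :: "bool \<Rightarrow> 'k::comm_ring_1 xpoly" where
  "Ediff b = (if b then E1 else E0)"

text \<open>The leading parts of the entries of \<open>[A, genC b]\<close>, for A in F of the shape given by
  \<open>ga, gb, t\<close>; the constant part \<open>f\<close> of A does not contribute.\<close>

definition comm_lead :: "bool \<Rightarrow> 'k::comm_ring_1 xpoly \<Rightarrow> 'k xpoly \<Rightarrow> 'k xpoly \<Rightarrow> bool \<Rightarrow> bool \<Rightarrow> 'k salg" where
  "comm_lead b ga gb t i j =
    (if \<not> i \<and> \<not> j then odd12 ga gb * yvar (ybot b) - yvar (ytop b) * odd21 ga gb t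
     else if \<not> i \<and> j then \<iota> (E0 * ga + E1 * gb) * yvar (ytop b) - \<iota> (Ediff b) * odd12 ga gb
     else if i \<and> \<not> j then \<iota> (Ediff b) * odd21 ga gb t - \<iota> (E0 * ga + E1 * gb) * yvar (ybot b)
     else odd21 ga gb t * yvar (ytop b) - yvar (ybot b) * odd12 ga gb)"

definition lead_deg :: "bool \<Rightarrow> bool \<Rightarrow> nat" where
  "lead_deg i j = (if i = j then 2 else 1)"

definition comm_form :: "'k::comm_ring_1 mat2 \<Rightarrow> bool \<Rightarrow> 'k xpoly \<Rightarrow> 'k xpoly \<Rightarrow> 'k xpoly \<Rightarrow> bool" where
  "comm_form Z b ga gb t \<longleftrightarrow>
    reg_mat Z \<and> (\<forall>i j. odd_ge (lead_deg i j + 2) (entry Z i j - comm_lead b ga gb t i j))"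

lemma odd_ge_comm_lead: "odd_ge (lead_deg i j) (comm_lead b ga gb t i j)"
proof -
  have y: "odd_ge 1 (yvar (ytop b))" "odd_ge 1 (yvar (ybot b))" by (rule odd_ge_yvar, simp)+
  have "odd_ge 2 (odd12 ga gb * yvar (ybot b) - yvar (ytop b) * odd21 ga gb t)"
    by (intro odd_ge_diff odd_ge_mult[OF odd_ge_odd12 y(2)] odd_ge_mult[OF y(1) odd_ge_odd21]) simp_all
  moreover have "odd_ge 2 (odd21 ga gb t * yvar (ytop b) - yvar (ybot b) * odd12 ga gb)"
    by (intro odd_ge_diff odd_ge_mult[OF odd_ge_odd21 y(1)] odd_ge_mult[OF y(2) odd_ge_odd12]) simp_all
  moreover have "odd_ge 1 (\<iota> (E0 * ga + E1 * gb) * yvar (ytop b) - \<iota> (Ediff b) * odd12 ga gb)"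
    by (intro odd_ge_diff odd_ge_\<iota>_left y odd_ge_odd12)
  moreover have "odd_ge 1 (\<iota> (Ediff b) * odd21 ga gb t - \<iota> (E0 * ga + E1 * gb) * yvar (ybot b))"
    by (intro odd_ge_diff odd_ge_\<iota>_left y odd_ge_odd21)
  ultimately show ?thesis
    unfolding comm_lead_def lead_deg_def by (cases i; cases j) simp_all
qed

lemma comm_form_mcomm_genC:
  assumes "F_form A"
  obtains ga gb t where "comm_form (mcomm A (genC b)) b ga gb t"
proof -
  obtain f ga gb t ra rd rb rc where A: "reg_mat A"
    "entry A False False = \<iota> (f + E0 * ga + E1 * gb) + ra" "entry A True True = \<iota> f + rd"
    "entry A False True = odd12 ga gb + rb" "entry A True False = odd21 ga gb t + rc"
    "odd_ge 2 ra" "odd_ge 2 rd" "odd_ge 3 rb" "odd_ge 3 rc"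
    using assms by (rule F_formE)
  define Z where "Z = mcomm A (genC b)"
  define s11 where "s11 = rb * yvar (ybot b) - yvar (ytop b) * rc"
  define s22 where "s22 = rc * yvar (ytop b) - yvar (ybot b) * rb"
  define s12 where "s12 = ra * yvar (ytop b) - yvar (ytop b) * rd
    + rb * \<iota> (xpvar (ybot b)) - \<iota> (xpvar (ytop b)) * rb"
  define s21 where "s21 = rc * \<iota> (xpvar (ytop b)) + rd * yvar (ybot b)
    - yvar (ybot b) * ra - \<iota> (xpvar (ybot b)) * rc"
  note commute_remainders = mult_\<iota>_commute[of ra] mult_\<iota>_commute[of rd] mult_\<iota>_commute[of rb]
    mult_\<iota>_commute[of rc] mult_\<iota>_left_commute[of ra] mult_\<iota>_left_commute[of rd]
    mult_\<iota>_left_commute[of rb] mult_\<iota>_left_commute[of rc]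
  note entries = entry_mcomm[OF A(1) reg_mat_genC] entry_mmul[OF A(1) reg_mat_genC]
    entry_mmul[OF reg_mat_genC A(1)] A(2-5) entry_genC
  have "entry Z False False = comm_lead b ga gb t False False + s11"
    unfolding Z_def entries s11_def comm_lead_def
    by (cases b; simp add: odd12_def odd21_def ytop_def ybot_def salg_normalize add_ac commute_remainders)
  moreover have "entry Z True True = comm_lead b ga gb t True True + s22"
    unfolding Z_def entries s22_def comm_lead_def
    by (cases b; simp add: odd12_def odd21_def ytop_def ybot_def salg_normalize add_ac commute_remainders)
  moreover have "entry Z False True = comm_lead b ga gb t False True + s12"
    unfolding Z_def entries s12_def comm_lead_def
    by (cases b; simp add: odd12_def odd21_def ytop_def ybot_def Ediff_def E0_def E1_def
        salg_normalize add_ac commute_remainders)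
  moreover have "entry Z True False = comm_lead b ga gb t True False + s21"
    unfolding Z_def entries s21_def comm_lead_def
    by (cases b; simp add: odd12_def odd21_def ytop_def ybot_def Ediff_def E0_def E1_def
        salg_normalize add_ac commute_remainders)
  moreover have "odd_ge 4 s11" "odd_ge 4 s22"
    unfolding s11_def s22_def
    by (intro odd_ge_diff odd_ge_mult[OF A(8) odd_ge_yvar] odd_ge_mult[OF odd_ge_yvar A(9)]
        odd_ge_mult[OF A(9) odd_ge_yvar] odd_ge_mult[OF odd_ge_yvar A(8)]; simp)+
  moreover have "odd_ge 3 s12" "odd_ge 3 s21"
    unfolding s12_def s21_def
    by (intro odd_ge_diff odd_ge_add odd_ge_\<iota>_left odd_ge_\<iota>_right A(8,9)
        odd_ge_mult[OF A(6) odd_ge_yvar] odd_ge_mult[OF odd_ge_yvar A(7)]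
        odd_ge_mult[OF A(7) odd_ge_yvar] odd_ge_mult[OF odd_ge_yvar A(6)]; simp)+
  ultimately show ?thesis
    using that[of ga gb t] reg_mat_mcomm[OF A(1) reg_mat_genC]
    unfolding comm_form_def lead_deg_def all_bool_eq Z_def by (simp add: eval_nat_numeral)
qed

section \<open>Products of commutators\<close>

lemma comm_form_reg_mat: "comm_form Z b ga gb t \<Longrightarrow> reg_mat Z"
  unfolding comm_form_def by blast

lemma comm_form_remainder:
  "comm_form Z b ga gb t \<Longrightarrow> odd_ge (lead_deg i j + 2) (entry Z i j - comm_lead b ga gb t i j)"
  unfolding comm_form_def by blast

lemma lead_deg_ge_1: "1 \<le> lead_deg i j"
  unfolding lead_deg_def by simp

lemma lead_deg_simps [simp]: "lead_deg False False = 2" "lead_deg True True = 2"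
  "lead_deg False True = 1" "lead_deg True False = 1"
  unfolding lead_deg_def by simp_all

lemma entry_triple_eq_lead:
  assumes "comm_form Z1 b1 a1 c1 t1" "comm_form Z2 b2 a2 c2 t2" "comm_form Z3 b3 a3 c3 t3"
  shows "entry Z1 i j * (entry Z2 k l * entry Z3 m n)
    = comm_lead b1 a1 c1 t1 i j * (comm_lead b2 a2 c2 t2 k l * comm_lead b3 a3 c3 t3 m n)"
  by (rule triple_product_eq_leading[OF odd_ge_comm_lead comm_form_remainder[OF assms(1)]
        odd_ge_comm_lead comm_form_remainder[OF assms(2)] odd_ge_comm_lead comm_form_remainder[OF assms(3)]])
    (use lead_deg_ge_1[of i j] lead_deg_ge_1[of k l] lead_deg_ge_1[of m n] in simp)

lemma entry_pair_yvar_eq_lead: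
  assumes "comm_form Z1 b1 a1 c1 t1" "comm_form Z2 b2 a2 c2 t2" "q \<le> 3"
  shows "entry Z1 i j * (entry Z2 k l * yvar q)
    = comm_lead b1 a1 c1 t1 i j * (comm_lead b2 a2 c2 t2 k l * yvar q)"
  by (rule triple_product_eq_leading[OF odd_ge_comm_lead comm_form_remainder[OF assms(1)]
        odd_ge_comm_lead comm_form_remainder[OF assms(2)] odd_ge_yvar[OF assms(3)]])
    (use lead_deg_ge_1[of i j] lead_deg_ge_1[of k l] in simp_all)

lemma yvar_entry_pair_eq_lead:
  assumes "comm_form Z1 b1 a1 c1 t1" "comm_form Z2 b2 a2 c2 t2" "q \<le> 3"
  shows "yvar q * (entry Z1 i j * entry Z2 k l)
    = yvar q * (comm_lead b1 a1 c1 t1 i j * comm_lead b2 a2 c2 t2 k l)"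
  by (rule triple_product_eq_leading[OF odd_ge_yvar[OF assms(3)] _ odd_ge_comm_lead
        comm_form_remainder[OF assms(1)] odd_ge_comm_lead comm_form_remainder[OF assms(2)]])
    (use lead_deg_ge_1[of i j] lead_deg_ge_1[of k l] in simp_all)

lemma \<iota>_entry_pair_eq_lead:
  assumes "comm_form Z1 b1 a1 c1 t1" "comm_form Z2 b2 a2 c2 t2" "3 \<le> lead_deg i j + lead_deg k l"
  shows "\<iota> p * (entry Z1 i j * entry Z2 k l)
    = \<iota> p * (comm_lead b1 a1 c1 t1 i j * comm_lead b2 a2 c2 t2 k l)"
  by (rule triple_product_eq_leading[OF odd_ge_\<iota> _ odd_ge_comm_lead comm_form_remainder[OF assms(1)]
        odd_ge_comm_lead comm_form_remainder[OF assms(2)]])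
    (use assms(3) in simp_all)

lemmas comm_lead_defs = comm_lead_def odd12_def odd21_def Ediff_def ytop_def ybot_def

lemma comm_form_triple_product_eq_zero:
  assumes Z1: "comm_form Z1 b1 a1 c1 t1" and Z2: "comm_form Z2 b2 a2 c2 t2"
    and Z3: "comm_form Z3 b3 a3 c3 t3"
  shows "mmul (mmul Z1 Z2) Z3 = mzero"
proof (rule reg_mat_eqI)
  note reg = comm_form_reg_mat[OF Z1] comm_form_reg_mat[OF Z2] comm_form_reg_mat[OF Z3]
  show "reg_mat (mmul (mmul Z1 Z2) Z3)" by (intro reg_mat_mmul reg)
  show "reg_mat mzero" by (rule reg_mat_mzero)
  fix i j
  show "entry (mmul (mmul Z1 Z2) Z3) i j = entry mzero i j"
    unfolding entry_mmul[OF reg_mat_mmul[OF reg(1,2)] reg(3)] entry_mmul[OF reg(1,2)]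
    apply (simp only: distrib_left distrib_right mult.assoc entry_triple_eq_lead[OF Z1 Z2 Z3])
    apply (cases b1; cases b2; cases b3; cases i; cases j;
        simp add: comm_lead_defs salg_normalize entry_mzero)
    done
qed

lemma comm_form_pair_product_commutes_genC:
  assumes Z1: "comm_form Z1 b1 a1 c1 t1" and Z2: "comm_form Z2 b2 a2 c2 t2"
  shows "mmul (mmul Z1 Z2) (genC k) = mmul (genC k) (mmul Z1 Z2)"
proof (rule reg_mat_eqI)
  note reg = comm_form_reg_mat[OF Z1] comm_form_reg_mat[OF Z2]
  note reg12 = reg_mat_mmul[OF reg]
  show "reg_mat (mmul (mmul Z1 Z2) (genC k))" "reg_mat (mmul (genC k) (mmul Z1 Z2))"
    by (intro reg_mat_mmul reg reg_mat_genC)+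
  fix i j
  show "entry (mmul (mmul Z1 Z2) (genC k)) i j = entry (mmul (genC k) (mmul Z1 Z2)) i j"
    unfolding entry_mmul[OF reg12 reg_mat_genC] entry_mmul[OF reg_mat_genC reg12] entry_mmul[OF reg]
    apply (cases i; cases j)
        apply (simp_all only: entry_genC distrib_left distrib_right mult.assoc
        mult_\<iota>_commute[of "entry _ _ _"] mult_\<iota>_left_commute[of "entry _ _ _"])
        apply (simp_all add: entry_pair_yvar_eq_lead[OF Z1 Z2] yvar_entry_pair_eq_lead[OF Z1 Z2]
        \<iota>_entry_pair_eq_lead[OF Z1 Z2])
    apply (cases b1; cases b2; cases k; simp add: comm_lead_defs salg_normalize add_ac E0_def E1_def)+
    done
qed

lemma mmul_assoc: "reg_mat A \<Longrightarrow> reg_mat B \<Longrightarrow> reg_mat C \<Longrightarrow> mmul (mmul A B) C = mmul A (mmul B C)"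
  by (rule reg_mat_eqI) (simp_all add: reg_mat_mmul entry_mmul algebra_simps)

lemma mmul_madd_left:
  "reg_mat A \<Longrightarrow> reg_mat B \<Longrightarrow> reg_mat C \<Longrightarrow> mmul (madd A B) C = madd (mmul A C) (mmul B C)"
  by (rule reg_mat_eqI) (simp_all add: reg_mat_mmul reg_mat_madd entry_mmul entry_madd algebra_simps)

lemma mmul_madd_right:
  "reg_mat A \<Longrightarrow> reg_mat B \<Longrightarrow> reg_mat C \<Longrightarrow> mmul C (madd A B) = madd (mmul C A) (mmul C B)"
  by (rule reg_mat_eqI) (simp_all add: reg_mat_mmul reg_mat_madd entry_mmul entry_madd algebra_simps)

lemma mmul_mone_left: "reg_mat A \<Longrightarrow> mmul mone A = A"
  by (rule reg_mat_eqI) (simp_all add: reg_mat_mmul reg_mat_mone entry_mmul entry_mone)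

lemma mmul_mone_right: "reg_mat A \<Longrightarrow> mmul A mone = A"
  by (rule reg_mat_eqI) (simp_all add: reg_mat_mmul reg_mat_mone entry_mmul entry_mone)

lemma mmul_mscal_left: "reg_mat A \<Longrightarrow> reg_mat B \<Longrightarrow> mmul (mscal c A) B = mscal c (mmul A B)"
  by (rule reg_mat_eqI) (simp_all add: reg_mat_mmul reg_mat_mscal entry_mmul entry_mscal algebra_simps)

lemma mmul_mscal_right: "reg_mat A \<Longrightarrow> reg_mat B \<Longrightarrow> mmul A (mscal c B) = mscal c (mmul A B)"
  by (rule reg_mat_eqI)
    (simp_all add: reg_mat_mmul reg_mat_mscal entry_mmul entry_mscal algebra_simps
      mult_\<iota>_commute[of "entry _ _ _"] mult_\<iota>_left_commute[of "entry _ _ _"])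

lemma madd_mzero: "reg_mat A \<Longrightarrow> madd A mzero = A"
  by (rule reg_mat_eqI) (simp_all add: reg_mat_madd reg_mat_mzero entry_madd entry_mzero)

lemma mmul_eq_madd_mcomm: "reg_mat A \<Longrightarrow> reg_mat C \<Longrightarrow> mmul A C = madd (mmul C A) (mcomm A C)"
  by (rule reg_mat_eqI) (simp_all add: reg_mat_mmul reg_mat_madd reg_mat_mcomm entry_mmul entry_madd entry_mcomm)

lemma commutes_genF_if_commutes_genC:
  assumes Q: "reg_mat Q" and gen: "\<And>k. mmul Q (genC k) = mmul (genC k) Q" and "D \<in> genF"
  shows "mmul Q D = mmul D Q"
  using \<open>D \<in> genF\<close>
proof (induction rule: genF.induct)
  case one
  then show ?case using Q by (simp add: mmul_mone_left mmul_mone_right)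
next
  case c1
  then show ?case using gen[of False] by (simp add: genC_def)
next
  case c2
  then show ?case using gen[of True] by (simp add: genC_def)
next
  case (add A B)
  then show ?case using Q by (simp add: mmul_madd_left mmul_madd_right reg_mat_genF)
next
  case (mul A B)
  then have A: "reg_mat A" and B: "reg_mat B" by (simp_all add: reg_mat_genF)
  have "mmul Q (mmul A B) = mmul (mmul Q A) B" using Q A B by (simp add: mmul_assoc)
  also have "\<dots> = mmul A (mmul Q B)" using Q A B mul.IH(1) by (simp add: mmul_assoc)
  also have "\<dots> = mmul (mmul A B) Q" using Q A B mul.IH(2) by (simp add: mmul_assoc)
  finally show ?case .
next
  case (scal A c)
  then show ?case using Q by (simp add: mmul_mscal_left mmul_mscal_right reg_mat_genF)
qed

lemma central_in_F_if_commutes_genC: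
  assumes "Q \<in> genF" "\<And>k. mmul Q (genC k) = mmul (genC k) Q"
  shows "central_in_F Q"
  unfolding central_in_F_def
  using assms commutes_genF_if_commutes_genC[OF reg_mat_genF[OF assms(1)]] by simp

lemma central_in_F_mmul_if_kills_commutators:
  assumes Q: "Q \<in> genF" and gen: "\<And>k. mmul Q (genC k) = mmul (genC k) Q"
    and kills: "\<And>k. mmul Q (mcomm B (genC k)) = mzero" and B: "B \<in> genF"
  shows "central_in_F (mmul Q B)"
proof (rule central_in_F_if_commutes_genC)
  show "mmul Q B \<in> genF" using Q B by (rule genF.mul)
  note reg = reg_mat_genF[OF Q] reg_mat_genF[OF B] reg_mat_genC
  fix k
  have "mmul (mmul Q B) (genC k) = mmul Q (mmul B (genC k))"
    by (rule mmul_assoc[OF reg])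
  also have "\<dots> = madd (mmul Q (mmul (genC k) B)) (mmul Q (mcomm B (genC k)))"
    by (simp only: mmul_eq_madd_mcomm[OF reg(2,3)] mmul_madd_right[OF reg_mat_mmul[OF reg(3,2)]
        reg_mat_mcomm[OF reg(2,3)] reg(1)])
  also have "\<dots> = mmul (mmul Q (genC k)) B"
    by (simp only: kills madd_mzero[OF reg_mat_mmul[OF reg(1) reg_mat_mmul[OF reg(3,2)]]]
        mmul_assoc[OF reg(1,3,2)])
  also have "\<dots> = mmul (genC k) (mmul Q B)"
    by (simp only: gen mmul_assoc[OF reg(3,1,2)])
  finally show "mmul (mmul Q B) (genC k) = mmul (genC k) (mmul Q B)" .
qed

lemma genC_in_genF: "genC b \<in> genF"
  unfolding genC_def by (simp add: genF.c1 genF.c2)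

lemma mcomm_in_genF: "A \<in> genF \<Longrightarrow> B \<in> genF \<Longrightarrow> mcomm A B \<in> genF"
  unfolding mcomm_def by (intro genF.add genF.mul genF.scal)

lemma foldl_mcomm_in_genF: "A \<in> genF \<Longrightarrow> foldl (\<lambda>acc j. mcomm acc (genC j)) A js \<in> genF"
  by (induction js arbitrary: A) (simp_all add: mcomm_in_genF genC_in_genF)

lemma lncomm_eq_mcomm:
  assumes "2 \<le> length u"
  obtains V c where "V \<in> genF" "lncomm u = mcomm V (genC c)"
proof -
  define step where "step acc j = mcomm acc (genC j)" for acc :: "'a mat2" and j
  obtain i js where u: "u = i # js" and "js \<noteq> []"
    using assms by (auto simp: Suc_le_length_iff numeral_2_eq_2)
  then have "lncomm u = foldl step (genC i) (butlast js @ [last js])"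
    unfolding step_def by simp
  also have "\<dots> = mcomm (foldl step (genC i) (butlast js)) (genC (last js))"
    unfolding step_def by simp
  finally show ?thesis
    using that foldl_mcomm_in_genF[OF genC_in_genF] unfolding step_def by blast
qed

lemma lncomm_comm_form:
  assumes "2 \<le> length u"
  obtains b ga gb t
  where "comm_form (lncomm u :: 'k::comm_ring_1 mat2) b ga gb t" "(lncomm u :: 'k mat2) \<in> genF"
proof -
  obtain V c where V: "V \<in> genF" and u: "(lncomm u :: 'k mat2) = mcomm V (genC c)"
    using assms by (rule lncomm_eq_mcomm)
  obtain ga gb t where "comm_form (mcomm V (genC c)) c ga gb t"
    using F_form_genF[OF V] by (rule comm_form_mcomm_genC)
  moreover have "mcomm V (genC c) \<in> genF" by (intro mcomm_in_genF genC_in_genF V)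
  ultimately show ?thesis unfolding u[symmetric] by (rule that)
qed

lemma comm_form_pair_product_kills_commutators:
  assumes "comm_form Z1 b1 a1 c1 t1" "comm_form Z2 b2 a2 c2 t2" "B \<in> genF"
  shows "mmul (mmul Z1 Z2) (mcomm B (genC k)) = mzero"
proof -
  obtain ga gb t where "comm_form (mcomm B (genC k)) k ga gb t"
    using F_form_genF[OF assms(3)] by (rule comm_form_mcomm_genC)
  then show ?thesis by (rule comm_form_triple_product_eq_zero[OF assms(1,2)])
qed

theorem lemma7:
  fixes u1 u2 :: "bool list"
  assumes "infinite (UNIV :: 'k::field set)"
    and "CHAR('k) \<noteq> 2"
    and "length u1 \<ge> 2" and "length u2 \<ge> 2"
  shows "strongly_central (mmul (lncomm u1 :: 'k mat2) (lncomm u2))"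
proof -
  obtain b1 g1 h1 t1 where Z1: "comm_form (lncomm u1 :: 'k mat2) b1 g1 h1 t1"
    and U1: "(lncomm u1 :: 'k mat2) \<in> genF"
    using assms(3) by (rule lncomm_comm_form)
  obtain b2 g2 h2 t2 where Z2: "comm_form (lncomm u2 :: 'k mat2) b2 g2 h2 t2"
    and U2: "(lncomm u2 :: 'k mat2) \<in> genF"
    using assms(4) by (rule lncomm_comm_form)
  define P where "P = mmul (lncomm u1 :: 'k mat2) (lncomm u2)"
  have P: "P \<in> genF" unfolding P_def using U1 U2 by (rule genF.mul)
  have gen: "mmul P (genC k) = mmul (genC k) P" for k
    unfolding P_def by (rule comm_form_pair_product_commutes_genC[OF Z1 Z2])
  have kills: "mmul P (mcomm B (genC k)) = mzero" if "B \<in> genF" for B k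
    unfolding P_def using Z1 Z2 that by (rule comm_form_pair_product_kills_commutators)
  show ?thesis
    unfolding strongly_central_def P_def[symmetric]
    using central_in_F_if_commutes_genC[OF P gen]
      central_in_F_mmul_if_kills_commutators[OF P gen kills] by blast
qed

end
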